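(* The set $$S=\{(p,q)\in(0,1)^2:\ \mathbb{P}^{(1,1)}_{p,q}(\tau=+\infty)>0\}$$ is an open subset of $(0,1)^2$.
   Context: Cooperative model: for $p,q\in(0,1)$, a Markov chain $(X_n,Y_n)_{n\ge0}$ on $\mathbb{N}^2$ whose transition law from state $(x,y)$ is $\mu_{(x,y)}=\mathrm{Bin}(2,q)^{*(x+y)}\otimes\mathrm{Bin}(2,p)^{*\min(x,y)}$, i.e. given the past, $X_{n+1}\sim\mathrm{Bin}(2(X_n+Y_n),q)$ and $Y_{n+1}\sim\mathrm{Bin}(2\min(X_n,Y_n),p)$ are independent. $\mathbb{P}^{(x,y)}_{p,q}$ denotes the law of this process started from $(x,y)$. $Z_n=\min(X_n,Y_n)$ and $\tau=\inf\{n\ge0: Z_n=0\}$. *)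

theory Defs
  imports "HOL-Probability.Probability"
begin

text \<open>One-step transition law of the cooperative model from state (x,y):
  X' ~ Bin(2(x+y), q) and Y' ~ Bin(2 min(x,y), p), independent.
  (Bin(2,q)^{*(x+y)} = Bin(2(x+y),q).)\<close>
definition coop_step :: "real \<Rightarrow> real \<Rightarrow> nat \<times> nat \<Rightarrow> (nat \<times> nat) pmf" where
  "coop_step p q s = pair_pmf (binomial_pmf (2 * (fst s + snd s)) q)
                              (binomial_pmf (2 * min (fst s) (snd s)) p)"

text \<open>coop_surv p q n s = P^s_{p,q}(Z_0 \<noteq> 0, ..., Z_n \<noteq> 0) = P^s_{p,q}(tau > n),
  computed by the Markov property (first-step decomposition).\<close>
fun coop_surv :: "real \<Rightarrow> real \<Rightarrow> nat \<Rightarrow> nat \<times> nat \<Rightarrow> real" where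
  "coop_surv p q 0 s = (if min (fst s) (snd s) = 0 then 0 else 1)"
| "coop_surv p q (Suc n) s = (if min (fst s) (snd s) = 0 then 0
      else measure_pmf.expectation (coop_step p q s) (coop_surv p q n))"

text \<open>P^s_{p,q}(tau = +infinity) = inf_n P^s_{p,q}(tau > n) (continuity from above,
  the events {tau > n} being decreasing).\<close>
definition coop_survival_prob :: "real \<Rightarrow> real \<Rightarrow> nat \<times> nat \<Rightarrow> real" where
  "coop_survival_prob p q s = (INF n. coop_surv p q n s)"

end

(*
  Write P_n(s) for the probability of extinction by time n from state s, and
  G_N(t) = E^(1,1) t^Z_(min N tau) for the generating function of the stopped process.
  Started from s1 + s2, the process dominates two independent copies started from s1
  and s2, because min is superadditive; hence P_n(s) <= P_n(1,1)^(min s), and the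
  Markov property at time N gives P_(N+n)(1,1) <= G_N(P_n(1,1)).  So if G_N(t) < t for
  some t < 1, then P_n(1,1) <= t for all n and survival has positive probability.
  Conversely, if P_n(1,1) <= c < 1 for all n, then P(1 <= Z_N <= K) -> 0, since from
  such a state extinction follows in one step with probability at least (1-p)^(2K);
  hence G_N(t) < t for t slightly above c and N large.  Positive survival is thus the
  condition "G_N(t) < t for some N and some t in [0,1)", which is open in (p, q)
  because G_N(t) is a polynomial in p and q.
*)

theory Submission
  imports Defs
begin

lemma min_eq_0_iff [simp]: "min m n = 0 \<longleftrightarrow> m = 0 \<or> n = (0::nat)"
  by auto

definition binomial_weight :: "nat \<Rightarrow> real \<Rightarrow> nat \<Rightarrow> real" where
  "binomial_weight n p k = real (n choose k) * p ^ k * (1 - p) ^ (n - k)"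

definition binomial_expectation :: "nat \<Rightarrow> real \<Rightarrow> (nat \<Rightarrow> real) \<Rightarrow> real" where
  "binomial_expectation n p g = (\<Sum>k\<le>n. binomial_weight n p k * g k)"

lemma binomial_weight_nonneg: "0 \<le> p \<Longrightarrow> p \<le> 1 \<Longrightarrow> 0 \<le> binomial_weight n p k"
  by (simp add: binomial_weight_def)

lemma binomial_weight_eq_0: "n < k \<Longrightarrow> binomial_weight n p k = 0"
  by (simp add: binomial_weight_def)

lemma binomial_weight_Suc_0: "binomial_weight (Suc n) p 0 = (1 - p) * binomial_weight n p 0"
  by (simp add: binomial_weight_def)

lemma binomial_weight_Suc_Suc:
  "binomial_weight (Suc n) p (Suc k) = p * binomial_weight n p k + (1 - p) * binomial_weight n p (Suc k)"
proof (cases "k < n")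
  case True
  then have "n - k = Suc (n - Suc k)" by simp
  then show ?thesis by (simp add: binomial_weight_def algebra_simps)
next
  case False
  then show ?thesis by (simp add: binomial_weight_def algebra_simps)
qed

lemma binomial_expectation_add:
  "binomial_expectation n p (\<lambda>k. f k + g k) = binomial_expectation n p f + binomial_expectation n p g"
  by (simp add: binomial_expectation_def sum.distrib algebra_simps)

lemma binomial_expectation_diff:
  "binomial_expectation n p (\<lambda>k. f k - g k) = binomial_expectation n p f - binomial_expectation n p g"
  by (simp add: binomial_expectation_def sum_subtractf algebra_simps)

lemma binomial_expectation_cmult:
  "binomial_expectation n p (\<lambda>k. c * f k) = c * binomial_expectation n p f"
  unfolding binomial_expectation_def sum_distrib_left by (rule sum.cong) auto

lemma binomial_expectation_multc:
  "binomial_expectation n p (\<lambda>k. f k * c) = binomial_expectation n p f * c"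
  using binomial_expectation_cmult [of n p c f] by (simp add: mult.commute)

lemma binomial_expectation_const: "binomial_expectation n p (\<lambda>_. c) = c"
proof -
  have "(\<Sum>k\<le>n. binomial_weight n p k) = (p + (1 - p)) ^ n"
    by (subst binomial_ring) (simp add: binomial_weight_def atLeast0AtMost)
  then show ?thesis by (simp add: binomial_expectation_def sum_distrib_right [symmetric])
qed

lemma binomial_expectation_indicator_0: "binomial_expectation n p (indicator {0}) = (1 - p) ^ n"
  by (simp add: binomial_expectation_def binomial_weight_def indicator_def sum.delta)

lemma binomial_expectation_mono:
  "0 \<le> p \<Longrightarrow> p \<le> 1 \<Longrightarrow> (\<And>k. f k \<le> g k) \<Longrightarrow> binomial_expectation n p f \<le> binomial_expectation n p g"
  unfolding binomial_expectation_def
  by (intro sum_mono mult_left_mono) (auto simp: binomial_weight_nonneg)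

lemma binomial_expectation_swap:
  "binomial_expectation m p (\<lambda>i. binomial_expectation n q (\<lambda>j. g i j))
   = binomial_expectation n q (\<lambda>j. binomial_expectation m p (\<lambda>i. g i j))"
  unfolding binomial_expectation_def sum_distrib_left
  by (subst sum.swap) (simp add: algebra_simps)

lemma binomial_expectation_Suc:
  "binomial_expectation (Suc n) p g
   = (1 - p) * binomial_expectation n p g + p * binomial_expectation n p (\<lambda>k. g (Suc k))"
proof -
  let ?w = "binomial_weight n p"
  have "binomial_expectation (Suc n) p g
      = binomial_weight (Suc n) p 0 * g 0 + (\<Sum>k\<le>n. binomial_weight (Suc n) p (Suc k) * g (Suc k))"
    unfolding binomial_expectation_def by (subst sum.atMost_Suc_shift) simp
  also have "(\<Sum>k\<le>n. binomial_weight (Suc n) p (Suc k) * g (Suc k))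
      = p * (\<Sum>k\<le>n. ?w k * g (Suc k)) + (1 - p) * (\<Sum>k\<le>n. ?w (Suc k) * g (Suc k))"
    by (simp add: binomial_weight_Suc_Suc distrib_right sum.distrib sum_distrib_left mult.assoc)
  also have "binomial_weight (Suc n) p 0 * g 0 + \<dots>
      = (1 - p) * (?w 0 * g 0 + (\<Sum>k\<le>n. ?w (Suc k) * g (Suc k))) + p * (\<Sum>k\<le>n. ?w k * g (Suc k))"
    by (simp add: binomial_weight_Suc_0 algebra_simps)
  also have "?w 0 * g 0 + (\<Sum>k\<le>n. ?w (Suc k) * g (Suc k)) = (\<Sum>k\<le>Suc n. ?w k * g k)"
    by (subst sum.atMost_Suc_shift) simp
  also have "\<dots> = binomial_expectation n p g"
    by (simp add: binomial_expectation_def binomial_weight_eq_0)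
  finally show ?thesis by (simp add: binomial_expectation_def)
qed

lemma binomial_expectation_add_trials:
  "binomial_expectation (m + n) p g
   = binomial_expectation m p (\<lambda>a. binomial_expectation n p (\<lambda>b. g (a + b)))"
proof (induction m arbitrary: g)
  case 0
  then show ?case by (simp add: binomial_expectation_def binomial_weight_def)
next
  case (Suc m)
  then show ?case by (simp add: binomial_expectation_Suc)
qed

lemma binomial_expectation_antimono_trials:
  assumes "0 \<le> p" "p \<le> 1" "m \<le> n" and antimono: "\<And>a b. a \<le> b \<Longrightarrow> g b \<le> g a"
  shows "binomial_expectation n p g \<le> binomial_expectation m p g"
proof -
  obtain d where n: "n = m + d" using \<open>m \<le> n\<close> le_Suc_ex by blast
  have "binomial_expectation n p g
        = binomial_expectation m p (\<lambda>a. binomial_expectation d p (\<lambda>b. g (a + b)))"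
    by (simp add: n binomial_expectation_add_trials)
  also have "\<dots> \<le> binomial_expectation m p (\<lambda>a. binomial_expectation d p (\<lambda>_. g a))"
    using assms by (intro binomial_expectation_mono) auto
  finally show ?thesis by (simp add: binomial_expectation_const)
qed

definition binomial_pair_expectation ::
    "nat \<Rightarrow> real \<Rightarrow> nat \<Rightarrow> real \<Rightarrow> (nat \<times> nat \<Rightarrow> real) \<Rightarrow> real" where
  "binomial_pair_expectation a q b p f
     = binomial_expectation a q (\<lambda>i. binomial_expectation b p (\<lambda>j. f (i, j)))"

lemma binomial_pair_expectation_add:
  "binomial_pair_expectation a q b p (\<lambda>t. f t + g t)
   = binomial_pair_expectation a q b p f + binomial_pair_expectation a q b p g"
  by (simp add: binomial_pair_expectation_def binomial_expectation_add)

lemma binomial_pair_expectation_diff: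
  "binomial_pair_expectation a q b p (\<lambda>t. f t - g t)
   = binomial_pair_expectation a q b p f - binomial_pair_expectation a q b p g"
  by (simp add: binomial_pair_expectation_def binomial_expectation_diff)

lemma binomial_pair_expectation_cmult:
  "binomial_pair_expectation a q b p (\<lambda>t. c * f t) = c * binomial_pair_expectation a q b p f"
  by (simp add: binomial_pair_expectation_def binomial_expectation_cmult)

lemma binomial_pair_expectation_multc:
  "binomial_pair_expectation a q b p (\<lambda>t. f t * c) = binomial_pair_expectation a q b p f * c"
  by (simp add: binomial_pair_expectation_def binomial_expectation_multc)

lemma binomial_pair_expectation_const: "binomial_pair_expectation a q b p (\<lambda>_. c) = c"
  by (simp add: binomial_pair_expectation_def binomial_expectation_const)

lemma binomial_pair_expectation_mono:
  "0 \<le> p \<Longrightarrow> p \<le> 1 \<Longrightarrow> 0 \<le> q \<Longrightarrow> q \<le> 1 \<Longrightarrow> (\<And>t. f t \<le> g t)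
   \<Longrightarrow> binomial_pair_expectation a q b p f \<le> binomial_pair_expectation a q b p g"
  unfolding binomial_pair_expectation_def by (intro binomial_expectation_mono) auto

lemma binomial_pair_expectation_antimono_trials:
  assumes "0 \<le> p" "p \<le> 1" "0 \<le> q" "q \<le> 1" "a \<le> a'" "b \<le> b'"
    and antimono: "\<And>i i' j j'. i \<le> i' \<Longrightarrow> j \<le> j' \<Longrightarrow> f (i', j') \<le> f (i, j)"
  shows "binomial_pair_expectation a' q b' p f \<le> binomial_pair_expectation a q b p f"
proof -
  have "binomial_pair_expectation a' q b' p f
        \<le> binomial_expectation a' q (\<lambda>i. binomial_expectation b p (\<lambda>j. f (i, j)))"
    unfolding binomial_pair_expectation_def using assms
    by (intro binomial_expectation_mono binomial_expectation_antimono_trials) auto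
  also have "\<dots> \<le> binomial_pair_expectation a q b p f"
    unfolding binomial_pair_expectation_def using assms
    by (intro binomial_expectation_antimono_trials binomial_expectation_mono) auto
  finally show ?thesis .
qed

lemma binomial_pair_expectation_add_trials:
  "binomial_pair_expectation (a1 + a2) q (b1 + b2) p f
   = binomial_pair_expectation a1 q b1 p
       (\<lambda>t. binomial_pair_expectation a2 q b2 p (\<lambda>u. f (fst t + fst u, snd t + snd u)))"
  unfolding binomial_pair_expectation_def binomial_expectation_add_trials
  by (subst binomial_expectation_swap) simp

text \<open>The one-step expectation operator of the chain, written as a polynomial in \<open>p\<close> and \<open>q\<close>.\<close>
definition coop_step_expectation :: "real \<Rightarrow> real \<Rightarrow> nat \<times> nat \<Rightarrow> (nat \<times> nat \<Rightarrow> real) \<Rightarrow> real" where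
  "coop_step_expectation p q s f
     = binomial_pair_expectation (2 * (fst s + snd s)) q (2 * min (fst s) (snd s)) p f"

lemma expectation_coop_step:
  assumes "0 \<le> p" "p \<le> 1" "0 \<le> q" "q \<le> 1"
  shows "measure_pmf.expectation (coop_step p q s) f = coop_step_expectation p q s f"
proof -
  define a where "a = 2 * (fst s + snd s)"
  define b where "b = 2 * min (fst s) (snd s)"
  have step: "coop_step p q s = pair_pmf (binomial_pmf a q) (binomial_pmf b p)"
    by (simp add: coop_step_def a_def b_def)
  have "measure_pmf.expectation (coop_step p q s) f = (\<Sum>t\<in>{..a} \<times> {..b}. f t * pmf (coop_step p q s) t)"
  proof (rule integral_measure_pmf_real)
    fix t assume "t \<in> set_pmf (coop_step p q s)"
    then show "t \<in> {..a} \<times> {..b}"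
      using assms by (auto simp: step set_pmf_binomial_eq split: if_splits)
  qed simp
  also have "\<dots> = (\<Sum>t\<in>{..a} \<times> {..b}. binomial_weight a q (fst t) * (binomial_weight b p (snd t) * f t))"
    using assms by (intro sum.cong) (auto simp: step pmf_pair binomial_weight_def)
  also have "\<dots> = (\<Sum>i\<le>a. \<Sum>j\<le>b. binomial_weight a q i * (binomial_weight b p j * f (i, j)))"
    by (simp add: sum.cartesian_product case_prod_beta)
  finally show ?thesis
    by (simp add: coop_step_expectation_def binomial_pair_expectation_def binomial_expectation_def
        a_def b_def sum_distrib_left)
qed

text \<open>\<open>stopped_expectation p q N h s\<close> is \<open>\<bbbE>\<^sup>s h(Z\<^bsub>min N \<tau>\<^esub>)\<close>.\<close>
fun stopped_expectation :: "real \<Rightarrow> real \<Rightarrow> nat \<Rightarrow> (nat \<Rightarrow> real) \<Rightarrow> nat \<times> nat \<Rightarrow> real" where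
  "stopped_expectation p q 0 h s = h (min (fst s) (snd s))"
| "stopped_expectation p q (Suc N) h s = (if min (fst s) (snd s) = 0 then h 0
     else coop_step_expectation p q s (stopped_expectation p q N h))"

lemma stopped_expectation_add:
  "stopped_expectation p q N (\<lambda>z. g z + h z) s
   = stopped_expectation p q N g s + stopped_expectation p q N h s"
proof (induction N arbitrary: s)
  case (Suc N)
  have "stopped_expectation p q N (\<lambda>z. g z + h z)
        = (\<lambda>t. stopped_expectation p q N g t + stopped_expectation p q N h t)"
    using Suc.IH by (intro ext)
  then show ?case by (simp add: coop_step_expectation_def binomial_pair_expectation_add)
qed simp

lemma stopped_expectation_cmult:
  "stopped_expectation p q N (\<lambda>z. c * h z) s = c * stopped_expectation p q N h s"
proof (induction N arbitrary: s)
  case (Suc N)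
  have "stopped_expectation p q N (\<lambda>z. c * h z) = (\<lambda>t. c * stopped_expectation p q N h t)"
    using Suc.IH by (intro ext)
  then show ?case by (simp add: coop_step_expectation_def binomial_pair_expectation_cmult)
qed simp

lemma stopped_expectation_const: "stopped_expectation p q N (\<lambda>_. c) s = c"
proof (induction N arbitrary: s)
  case (Suc N)
  have "stopped_expectation p q N (\<lambda>_. c) = (\<lambda>_. c)"
    using Suc.IH by (intro ext)
  then show ?case by (simp add: coop_step_expectation_def binomial_pair_expectation_const)
qed simp

lemma stopped_expectation_mono:
  assumes "0 \<le> p" "p \<le> 1" "0 \<le> q" "q \<le> 1" "\<And>z. g z \<le> h z"
  shows "stopped_expectation p q N g s \<le> stopped_expectation p q N h s"
  using assms(5) by (induction N arbitrary: s)
    (auto simp: coop_step_expectation_def intro!: binomial_pair_expectation_mono assms(1-4))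

lemma stopped_expectation_continuous_on:
  "continuous_on A (\<lambda>x. stopped_expectation (fst x) (snd x) N h s)"
proof (induction N arbitrary: s)
  case (Suc N)
  show ?case
  proof (cases "min (fst s) (snd s) = 0")
    case False
    then show ?thesis
      unfolding stopped_expectation.simps if_not_P [OF False] coop_step_expectation_def
        binomial_pair_expectation_def binomial_expectation_def binomial_weight_def
      by (intro continuous_intros Suc.IH)
  qed simp
qed simp

definition extinction_prob :: "real \<Rightarrow> real \<Rightarrow> nat \<Rightarrow> nat \<times> nat \<Rightarrow> real" where
  "extinction_prob p q n = stopped_expectation p q n (indicator {0})"

lemma extinction_prob_0: "extinction_prob p q 0 s = (if min (fst s) (snd s) = 0 then 1 else 0)"
  by (simp add: extinction_prob_def)

lemma extinction_prob_Suc: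
  "extinction_prob p q (Suc n) s
   = (if min (fst s) (snd s) = 0 then 1 else coop_step_expectation p q s (extinction_prob p q n))"
  by (simp add: extinction_prob_def)

lemma coop_surv_eq_1_minus_extinction_prob:
  assumes "0 \<le> p" "p \<le> 1" "0 \<le> q" "q \<le> 1"
  shows "coop_surv p q n s = 1 - extinction_prob p q n s"
proof (induction n arbitrary: s)
  case 0
  then show ?case by (simp add: extinction_prob_0)
next
  case (Suc n)
  have "coop_surv p q n = (\<lambda>t. 1 - extinction_prob p q n t)"
    using Suc.IH by (intro ext)
  then show ?case
    by (simp add: extinction_prob_Suc expectation_coop_step [OF assms] coop_step_expectation_def
        binomial_pair_expectation_diff binomial_pair_expectation_const)
qed

context
  fixes p q :: real
  assumes pq: "0 \<le> p" "p \<le> 1" "0 \<le> q" "q \<le> 1"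
begin

lemma extinction_prob_nonneg: "0 \<le> extinction_prob p q n s"
  using stopped_expectation_mono [OF pq, of "\<lambda>_. 0" "indicator {0}" n s]
  by (simp add: extinction_prob_def stopped_expectation_const)

lemma extinction_prob_le_1: "extinction_prob p q n s \<le> 1"
  using stopped_expectation_mono [OF pq, of "indicator {0}" "\<lambda>_. 1" n s]
  by (simp add: extinction_prob_def stopped_expectation_const indicator_def)

lemma extinction_prob_antimono:
  "fst s \<le> fst s' \<Longrightarrow> snd s \<le> snd s' \<Longrightarrow> extinction_prob p q n s' \<le> extinction_prob p q n s"
proof (induction n arbitrary: s s')
  case 0
  then show ?case by (auto simp: extinction_prob_0)
next
  case (Suc n)
  show ?case
  proof (cases "min (fst s) (snd s) = 0")
    case True
    then show ?thesis using extinction_prob_le_1 [of "Suc n" s'] by (simp add: extinction_prob_Suc)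
  next
    case False
    with Suc.prems have "min (fst s') (snd s') \<noteq> 0" by auto
    then have "extinction_prob p q (Suc n) s' = coop_step_expectation p q s' (extinction_prob p q n)"
      by (simp add: extinction_prob_Suc)
    also have "\<dots> \<le> coop_step_expectation p q s (extinction_prob p q n)"
      unfolding coop_step_expectation_def using Suc.prems
      by (intro binomial_pair_expectation_antimono_trials pq Suc.IH) auto
    also have "\<dots> = extinction_prob p q (Suc n) s"
      using False by (simp add: extinction_prob_Suc)
    finally show ?thesis .
  qed
qed

text \<open>Two independent processes started from \<open>s\<^sub>1\<close> and \<open>s\<^sub>2\<close> are dominated by one
  started from \<open>s\<^sub>1 + s\<^sub>2\<close>, since \<open>min\<close> is superadditive.\<close>
lemma extinction_prob_add_le_mult:
  "extinction_prob p q n (fst s1 + fst s2, snd s1 + snd s2)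
   \<le> extinction_prob p q n s1 * extinction_prob p q n s2"
proof (induction n arbitrary: s1 s2)
  case 0
  then show ?case by (auto simp: extinction_prob_0)
next
  case (Suc n)
  let ?s = "(fst s1 + fst s2, snd s1 + snd s2)"
  let ?E = "extinction_prob p q n"
  consider "min (fst s1) (snd s1) = 0" | "min (fst s2) (snd s2) = 0"
    | "min (fst s1) (snd s1) \<noteq> 0" "min (fst s2) (snd s2) \<noteq> 0"
    by blast
  then show ?case
  proof cases
    case 1
    then show ?thesis
      using extinction_prob_antimono [of s2 ?s "Suc n"] by (simp add: extinction_prob_Suc)
  next
    case 2
    then show ?thesis
      using extinction_prob_antimono [of s1 ?s "Suc n"] by (simp add: extinction_prob_Suc)
  next
    case 3
    define a1 a2 b1 b2 where "a1 = 2 * (fst s1 + snd s1)" and "a2 = 2 * (fst s2 + snd s2)"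
      and "b1 = 2 * min (fst s1) (snd s1)" and "b2 = 2 * min (fst s2) (snd s2)"
    have "extinction_prob p q (Suc n) ?s
          = binomial_pair_expectation (a1 + a2) q (2 * min (fst ?s) (snd ?s)) p ?E"
      using 3 by (simp add: extinction_prob_Suc coop_step_expectation_def a1_def a2_def algebra_simps)
    also have "\<dots> \<le> binomial_pair_expectation (a1 + a2) q (b1 + b2) p ?E"
      by (intro binomial_pair_expectation_antimono_trials pq extinction_prob_antimono)
        (auto simp: b1_def b2_def min_def)
    also have "\<dots> = binomial_pair_expectation a1 q b1 p
                      (\<lambda>t. binomial_pair_expectation a2 q b2 p (\<lambda>u. ?E (fst t + fst u, snd t + snd u)))"
      by (rule binomial_pair_expectation_add_trials)
    also have "\<dots> \<le> binomial_pair_expectation a1 q b1 p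
                      (\<lambda>t. binomial_pair_expectation a2 q b2 p (\<lambda>u. ?E t * ?E u))"
      by (intro binomial_pair_expectation_mono pq Suc.IH)
    also have "\<dots> = extinction_prob p q (Suc n) s1 * extinction_prob p q (Suc n) s2"
      using 3 by (simp add: binomial_pair_expectation_cmult binomial_pair_expectation_multc
          extinction_prob_Suc coop_step_expectation_def a1_def a2_def b1_def b2_def)
    finally show ?thesis .
  qed
qed

lemma extinction_prob_le_power_min:
  "extinction_prob p q n s \<le> extinction_prob p q n (1, 1) ^ min (fst s) (snd s)"
proof -
  have diagonal: "extinction_prob p q n (z, z) \<le> extinction_prob p q n (1, 1) ^ z" for z
  proof (induction z)
    case 0
    then show ?case using extinction_prob_le_1 by simp
  next
    case (Suc z)
    have "extinction_prob p q n (Suc z, Suc z)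
          \<le> extinction_prob p q n (1, 1) * extinction_prob p q n (z, z)"
      using extinction_prob_add_le_mult [of n "(1, 1)" "(z, z)"] by simp
    also have "\<dots> \<le> extinction_prob p q n (1, 1) ^ Suc z"
      using Suc.IH by (simp add: mult_left_mono extinction_prob_nonneg)
    finally show ?case .
  qed
  have "extinction_prob p q n s \<le> extinction_prob p q n (min (fst s) (snd s), min (fst s) (snd s))"
    by (rule extinction_prob_antimono) auto
  then show ?thesis using diagonal order_trans by blast
qed

lemma extinction_prob_add_le_stopped_expectation:
  "extinction_prob p q (N + n) s \<le> stopped_expectation p q N (\<lambda>z. extinction_prob p q n (1, 1) ^ z) s"
proof (induction N arbitrary: s)
  case 0
  then show ?case using extinction_prob_le_power_min by simp
next
  case (Suc N)
  then show ?case
    by (auto simp: extinction_prob_Suc coop_step_expectation_def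
        intro!: binomial_pair_expectation_mono pq)
qed

lemma stopped_expectation_le_extinction_prob_Suc:
  "stopped_expectation p q N (\<lambda>z. (1 - p) ^ (2 * z)) s \<le> extinction_prob p q (Suc N) s"
proof (induction N arbitrary: s)
  case 0
  show ?case
  proof (cases "min (fst s) (snd s) = 0")
    case False
    let ?a = "2 * (fst s + snd s)" and ?b = "2 * min (fst s) (snd s)"
    have "(1 - p) ^ ?b = binomial_pair_expectation ?a q ?b p (\<lambda>t. indicator {0} (snd t))"
      by (simp add: binomial_pair_expectation_def binomial_expectation_indicator_0
          binomial_expectation_const)
    also have "\<dots> \<le> binomial_pair_expectation ?a q ?b p (extinction_prob p q 0)"
      by (intro binomial_pair_expectation_mono pq) (auto simp: extinction_prob_0 indicator_def)
    finally show ?thesis using False by (simp add: extinction_prob_Suc coop_step_expectation_def)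
  qed (auto simp: extinction_prob_Suc)
next
  case (Suc N)
  show ?case
  proof (cases "min (fst s) (snd s) = 0")
    case False
    have "coop_step_expectation p q s (stopped_expectation p q N (\<lambda>z. (1 - p) ^ (2 * z)))
          \<le> coop_step_expectation p q s (extinction_prob p q (Suc N))"
      unfolding coop_step_expectation_def by (intro binomial_pair_expectation_mono pq Suc.IH)
    then show ?thesis using False by (simp add: extinction_prob_Suc [of p q "Suc N"])
  qed (simp add: extinction_prob_Suc)
qed

lemma extinction_prob_mono: "m \<le> n \<Longrightarrow> extinction_prob p q m s \<le> extinction_prob p q n s"
proof (rule lift_Suc_mono_le)
  fix n
  have "extinction_prob p q n s \<le> stopped_expectation p q n (\<lambda>z. (1 - p) ^ (2 * z)) s"
    unfolding extinction_prob_def using pq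
    by (intro stopped_expectation_mono pq) (auto simp: indicator_def)
  also have "\<dots> \<le> extinction_prob p q (Suc n) s"
    by (rule stopped_expectation_le_extinction_prob_Suc)
  finally show "extinction_prob p q n s \<le> extinction_prob p q (Suc n) s" .
qed

text \<open>\<open>t \<mapsto> stopped_expectation p q N (\<lambda>z. t ^ z) s\<close> is the probability generating
  function of \<open>Z\<^bsub>min N \<tau>\<^esub>\<close> under \<open>\<bbbP>\<^sup>s\<close>.\<close>
lemma extinction_prob_le_if_pgf_below_diagonal:
  assumes "0 \<le> t" "t < 1" and below: "stopped_expectation p q N (\<lambda>z. t ^ z) (1, 1) < t"
  shows "extinction_prob p q n (1, 1) \<le> t"
proof -
  have "N \<noteq> 0" using below by (cases N) auto
  have multiple: "extinction_prob p q (k * N) (1, 1) \<le> t" for k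
  proof (induction k)
    case 0
    then show ?case using \<open>0 \<le> t\<close> by (simp add: extinction_prob_0)
  next
    case (Suc k)
    have "extinction_prob p q (N + k * N) (1, 1)
          \<le> stopped_expectation p q N (\<lambda>z. extinction_prob p q (k * N) (1, 1) ^ z) (1, 1)"
      by (rule extinction_prob_add_le_stopped_expectation)
    also have "\<dots> \<le> stopped_expectation p q N (\<lambda>z. t ^ z) (1, 1)"
      using Suc.IH by (intro stopped_expectation_mono pq power_mono extinction_prob_nonneg)
    finally show ?case using below by simp
  qed
  have "extinction_prob p q n (1, 1) \<le> extinction_prob p q (n * N) (1, 1)"
    using \<open>N \<noteq> 0\<close> by (intro extinction_prob_mono) simp
  then show ?thesis using multiple [of n] by simp
qed

text \<open>From a state with \<open>1 \<le> Z \<le> K\<close>, the next \<open>Y\<close> vanishes with probability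
  \<open>(1 - p)\<^sup>2\<^sup>Z \<ge> (1 - p)\<^sup>2\<^sup>K\<close>.\<close>
lemma extinction_prob_Suc_ge:
  "extinction_prob p q N s + (1 - p) ^ (2 * K) * stopped_expectation p q N (indicator {1..K}) s
   \<le> extinction_prob p q (Suc N) s"
proof -
  have "extinction_prob p q N s + (1 - p) ^ (2 * K) * stopped_expectation p q N (indicator {1..K}) s
        = stopped_expectation p q N (\<lambda>z. indicator {0} z + (1 - p) ^ (2 * K) * indicator {1..K} z) s"
    by (simp add: stopped_expectation_add stopped_expectation_cmult extinction_prob_def)
  also have "\<dots> \<le> stopped_expectation p q N (\<lambda>z. (1 - p) ^ (2 * z)) s"
  proof (intro stopped_expectation_mono pq)
    fix z :: nat
    have "(1 - p) ^ (2 * K) \<le> (1 - p) ^ (2 * z)" if "z \<le> K"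
      using pq that by (intro power_decreasing) auto
    then show "indicator {0} z + (1 - p) ^ (2 * K) * indicator {1..K} z \<le> (1 - p) ^ (2 * z)"
      using pq by (auto simp: indicator_def)
  qed
  also have "\<dots> \<le> extinction_prob p q (Suc N) s"
    by (rule stopped_expectation_le_extinction_prob_Suc)
  finally show ?thesis .
qed

text \<open>Summing the previous inequality shows that the series over \<open>N\<close> of
  \<open>\<bbbP>\<^sup>s(1 \<le> Z\<^bsub>min N \<tau>\<^esub> \<le> K)\<close> is bounded, so its terms become small.\<close>
lemma ex_stopped_expectation_bounded_population_less:
  assumes "p < 1" "0 < \<epsilon>"
  shows "\<exists>N. stopped_expectation p q N (indicator {1..K}) s < \<epsilon>"
proof (rule ccontr)
  assume "\<nexists>N. stopped_expectation p q N (indicator {1..K}) s < \<epsilon>"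
  then have large: "\<epsilon> \<le> stopped_expectation p q N (indicator {1..K}) s" for N
    by (simp add: not_less)
  define \<delta> where "\<delta> = (1 - p) ^ (2 * K)"
  have "0 < \<delta>" using \<open>p < 1\<close> by (simp add: \<delta>_def)
  have linear: "real M * (\<delta> * \<epsilon>) \<le> extinction_prob p q M s" for M
  proof (induction M)
    case 0
    then show ?case by (simp add: extinction_prob_nonneg)
  next
    case (Suc M)
    have "\<delta> * \<epsilon> \<le> \<delta> * stopped_expectation p q M (indicator {1..K}) s"
      using \<open>0 < \<delta>\<close> large by simp
    then show ?case
      using Suc.IH extinction_prob_Suc_ge [of M s K] by (simp add: \<delta>_def algebra_simps)
  qed
  obtain M where "1 < real M * (\<delta> * \<epsilon>)"
    using ex_less_of_nat_mult [of "\<delta> * \<epsilon>" 1] \<open>0 < \<delta>\<close> \<open>0 < \<epsilon>\<close> by auto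
  then show False using linear [of M] extinction_prob_le_1 [of M s] by simp
qed

lemma pgf_below_diagonal_if_extinction_prob_bounded:
  assumes "p < 1" "c < 1" and bounded: "\<And>n. extinction_prob p q n s \<le> c"
  shows "\<exists>N t. 0 \<le> t \<and> t < 1 \<and> stopped_expectation p q N (\<lambda>z. t ^ z) s < t"
proof -
  define \<epsilon> where "\<epsilon> = (1 - c) / 2"
  define t where "t = c + \<epsilon>"
  have "0 \<le> c" using bounded [of 0] extinction_prob_nonneg [of 0 s] by linarith
  then have "0 < \<epsilon>" "0 \<le> t" "t < 1" using \<open>c < 1\<close> by (auto simp: t_def \<epsilon>_def field_simps)
  obtain K where K: "t ^ K < \<epsilon> / 2"
    using real_arch_pow_inv [of "\<epsilon> / 2" t] \<open>0 < \<epsilon>\<close> \<open>t < 1\<close> by auto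
  obtain N where N: "stopped_expectation p q N (indicator {1..K}) s < \<epsilon> / 2"
    using ex_stopped_expectation_bounded_population_less [OF \<open>p < 1\<close>, of "\<epsilon> / 2" K s] \<open>0 < \<epsilon>\<close>
    by auto
  have "t ^ z \<le> indicator {0} z + indicator {1..K} z + t ^ Suc K" for z
  proof (cases "z \<le> K")
    case True
    have "t ^ z \<le> 1" "0 \<le> t ^ Suc K"
      using \<open>0 \<le> t\<close> \<open>t < 1\<close> by (simp_all add: power_le_one)
    with True show ?thesis by (auto simp: indicator_def)
  next
    case False
    then have "t ^ z \<le> t ^ Suc K"
      using \<open>0 \<le> t\<close> \<open>t < 1\<close> by (intro power_decreasing) auto
    with False show ?thesis by (simp add: indicator_def)
  qed
  then have "stopped_expectation p q N (\<lambda>z. t ^ z) s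
             \<le> stopped_expectation p q N (\<lambda>z. indicator {0} z + indicator {1..K} z + t ^ Suc K) s"
    by (intro stopped_expectation_mono pq)
  also have "\<dots> = extinction_prob p q N s + stopped_expectation p q N (indicator {1..K}) s + t ^ Suc K"
    by (simp add: stopped_expectation_add stopped_expectation_const extinction_prob_def)
  also have "\<dots> < t"
    using bounded [of N] N K power_decreasing [of K "Suc K" t] \<open>0 \<le> t\<close> \<open>t < 1\<close>
    by (simp add: t_def)
  finally show ?thesis using \<open>0 \<le> t\<close> \<open>t < 1\<close> by blast
qed

end

lemma coop_survival_prob_pos_iff:
  assumes "0 \<le> p" "p < 1" "0 \<le> q" "q \<le> 1"
  shows "coop_survival_prob p q (1, 1) > 0 \<longleftrightarrow>
         (\<exists>N t. 0 \<le> t \<and> t < 1 \<and> stopped_expectation p q N (\<lambda>z. t ^ z) (1, 1) < t)"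
proof -
  have pq: "0 \<le> p" "p \<le> 1" "0 \<le> q" "q \<le> 1" using assms by auto
  note surv = coop_surv_eq_1_minus_extinction_prob [OF pq]
  have bdd: "bdd_below (range (\<lambda>n. coop_surv p q n (1, 1)))"
    by (rule bdd_belowI [of _ 0]) (auto simp: surv extinction_prob_le_1 [OF pq])
  show ?thesis
  proof
    assume "coop_survival_prob p q (1, 1) > 0"
    moreover have "extinction_prob p q n (1, 1) \<le> 1 - coop_survival_prob p q (1, 1)" for n
      using cINF_lower [OF bdd, of n] surv [of n "(1, 1)"] by (simp add: coop_survival_prob_def)
    ultimately show "\<exists>N t. 0 \<le> t \<and> t < 1 \<and> stopped_expectation p q N (\<lambda>z. t ^ z) (1, 1) < t"
      by (intro pgf_below_diagonal_if_extinction_prob_bounded [OF pq \<open>p < 1\<close>,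
          of "1 - coop_survival_prob p q (1, 1)"]) auto
  next
    assume "\<exists>N t. 0 \<le> t \<and> t < 1 \<and> stopped_expectation p q N (\<lambda>z. t ^ z) (1, 1) < t"
    then obtain N t where t: "0 \<le> t" "t < 1" "stopped_expectation p q N (\<lambda>z. t ^ z) (1, 1) < t"
      by blast
    have "1 - t \<le> coop_survival_prob p q (1, 1)"
      unfolding coop_survival_prob_def using extinction_prob_le_if_pgf_below_diagonal [OF pq t]
      by (intro cINF_greatest) (auto simp: surv)
    then show "coop_survival_prob p q (1, 1) > 0" using t by simp
  qed
qed

theorem theorem6:
  "openin (top_of_set ({0<..<1::real} \<times> {0<..<1::real}))
     {(p, q). p \<in> {0<..<1} \<and> q \<in> {0<..<1} \<and> coop_survival_prob p q (1, 1) > 0}"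
proof -
  let ?below = "\<lambda>x N t. stopped_expectation (fst x) (snd x) N (\<lambda>z. t ^ z) (1, 1) < t"
  have "{(p, q). p \<in> {0<..<1} \<and> q \<in> {0<..<1} \<and> coop_survival_prob p q (1, 1) > 0}
        = ({0<..<1} \<times> {0<..<1}) \<inter> {x. \<exists>N t. 0 \<le> t \<and> t < 1 \<and> ?below x N t}"
    using coop_survival_prob_pos_iff by fastforce
  moreover have "open {x. \<exists>N t. 0 \<le> t \<and> t < 1 \<and> ?below x N t}"
    by (intro open_Collect_ex open_Collect_conj open_Collect_const open_Collect_less
        continuous_intros stopped_expectation_continuous_on)
  ultimately show ?thesis by (simp add: openin_open_Int)
qed

end
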